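(* Let $G_1,\ldots,G_r$ be confusion graphs of $r$ users over a finite alphabet $\Sigma$, and let $x_1,\ldots,x_r\in[0,1]$ with $\sum_{i=1}^r x_i=1$. Then the rate vector $(x_1\log_2 c(G_1),\ldots,x_r\log_2 c(G_r))$ is feasible, where $c(G)$ denotes the Shannon capacity of $G$.
   Context: Setting: a sender broadcasts a word of length $n$ over a finite alphabet $\Sigma$ to $r$ users; user $i$ has a confusion graph $G_i$ on vertex set $\Sigma$, where $ab$ is an edge iff user $i$ cannot distinguish letters $a$ and $b$. Two words $x,y\in\Sigma^n$ are distinguishable by user $i$ if there is a coordinate $t$ with $x_t\neq y_t$ and $x_ty_t$ not an edge of $G_i$. A vector $(m_1,\ldots,m_r)$ of positive integers is feasible for length $n$ if there is a map $E:[m_1]\times\cdots\times[m_r]\to\Sigma^n$ such that for every $i$ and all tuples $a,a'$ with $a_i\neq a'_i$, $E(a)$ and $E(a')$ are distinguishable by user $i$. A rate vector $(R_1,\ldots,R_r)$ is feasible if there is a sequence of feasible vectors for lengths $n\to\infty$ with $R_i=\lim_{n\to\infty}\frac{\log_2 m_i^{(n)}}{n}$. The Shannon capacity of a graph $G$ is $c(G)=\lim_{n\to\infty}\alpha(G^n)^{1/n}$, where $G^n$ is the $n$-fold strong power of $G$ and $\alpha$ the independence number. *)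

theory Defs
  imports Complex_Main
begin

text \<open>A confusion graph on the alphabet 'a is given by a symmetric adjacency relation
  (edge ab iff the letters a and b cannot be distinguished).\<close>

definition confusion_graph :: "('a \<Rightarrow> 'a \<Rightarrow> bool) \<Rightarrow> bool" where
  "confusion_graph G \<longleftrightarrow> (\<forall>a b. G a b \<longrightarrow> G b a) \<and> (\<forall>a. \<not> G a a)"

definition distinguishable :: "('a \<Rightarrow> 'a \<Rightarrow> bool) \<Rightarrow> 'a list \<Rightarrow> 'a list \<Rightarrow> bool" where
  "distinguishable G x y \<longleftrightarrow>
     (\<exists>t < min (length x) (length y). x ! t \<noteq> y ! t \<and> \<not> G (x ! t) (y ! t))"

text \<open>Feasible vector (m_0,...,m_{r-1}) for length n: users indexed by i < r,
  message tuples are functions a with a i < m i for all i < r.\<close>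

definition feasible_vector ::
  "(nat \<Rightarrow> 'a \<Rightarrow> 'a \<Rightarrow> bool) \<Rightarrow> nat \<Rightarrow> nat \<Rightarrow> (nat \<Rightarrow> nat) \<Rightarrow> bool" where
  "feasible_vector G r n m \<longleftrightarrow>
     (\<forall>i<r. m i > 0) \<and>
     (\<exists>E :: (nat \<Rightarrow> nat) \<Rightarrow> 'a list.
        (\<forall>a. (\<forall>i<r. a i < m i) \<longrightarrow> length (E a) = n) \<and>
        (\<forall>i<r. \<forall>a a'. (\<forall>j<r. a j < m j) \<longrightarrow> (\<forall>j<r. a' j < m j) \<longrightarrow> a i \<noteq> a' i
             \<longrightarrow> distinguishable (G i) (E a) (E a')))"

definition feasible_rate ::
  "(nat \<Rightarrow> 'a \<Rightarrow> 'a \<Rightarrow> bool) \<Rightarrow> nat \<Rightarrow> (nat \<Rightarrow> real) \<Rightarrow> bool" where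
  "feasible_rate G r R \<longleftrightarrow>
     (\<exists>(ns :: nat \<Rightarrow> nat) (m :: nat \<Rightarrow> nat \<Rightarrow> nat).
        filterlim ns at_top sequentially \<and>
        (\<forall>k. feasible_vector G r (ns k) (m k)) \<and>
        (\<forall>i<r. (\<lambda>k. log 2 (real (m k i)) / real (ns k)) \<longlonglongrightarrow> R i))"

definition strong_power_adj :: "('a \<Rightarrow> 'a \<Rightarrow> bool) \<Rightarrow> nat \<Rightarrow> 'a list \<Rightarrow> 'a list \<Rightarrow> bool" where
  "strong_power_adj G n x y \<longleftrightarrow>
     x \<noteq> y \<and> (\<forall>t<n. x ! t = y ! t \<or> G (x ! t) (y ! t))"

definition independence_number_power :: "('a::finite \<Rightarrow> 'a \<Rightarrow> bool) \<Rightarrow> nat \<Rightarrow> nat" where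
  "independence_number_power G n =
     Max {card S | S. S \<subseteq> {x. length x = n} \<and>
            (\<forall>x\<in>S. \<forall>y\<in>S. \<not> strong_power_adj G n x y)}"

definition shannon_capacity :: "('a::finite \<Rightarrow> 'a \<Rightarrow> bool) \<Rightarrow> real" where
  "shannon_capacity G = lim (\<lambda>n. root n (real (independence_number_power G n)))"

end

theory Submission
  imports Defs
begin

text \<open>A set of pairwise distinguishable words of length \<open>n\<close> for user \<open>i\<close> is the same thing
  as an independent set of \<open>G\<^sub>i\<^sup>n\<close>, so user \<open>i\<close> can be sent one of
  \<open>\<alpha>(G\<^sub>i\<^sup>n)\<close> messages in a block of length \<open>n\<close>. Time sharing splits a word of
  length \<open>k\<close> into consecutive blocks of lengths \<open>\<lfloor>x\<^sub>i k\<rfloor>\<close>, one per user; a message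
  tuple is encoded by concatenating the codewords of its components, and two tuples
  differing in component \<open>i\<close> are distinguished by user \<open>i\<close> inside block \<open>i\<close>. Concatenation
  of codes also makes \<open>\<alpha>(G\<^sup>n)\<close> supermultiplicative, so by Fekete's lemma
  \<open>log \<alpha>(G\<^sup>n) / n\<close> converges to \<open>log c(G)\<close>, and user \<open>i\<close> attains the rate
  \<open>x\<^sub>i log c(G\<^sub>i)\<close>.\<close>

definition distinguishing_code ::
  "('a \<Rightarrow> 'a \<Rightarrow> bool) \<Rightarrow> nat \<Rightarrow> nat \<Rightarrow> (nat \<Rightarrow> 'a list) \<Rightarrow> bool" where
  "distinguishing_code G n k f \<longleftrightarrow>
     (\<forall>j<k. length (f j) = n) \<and> (\<forall>j<k. \<forall>j'<k. j \<noteq> j' \<longrightarrow> distinguishable G (f j) (f j'))"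

lemma distinguishable_imp_neq: "distinguishable G x y \<Longrightarrow> x \<noteq> y"
  unfolding distinguishable_def by auto

lemma distinguishable_append_middle:
  assumes "distinguishable G u v" and "length p = length p'"
  shows "distinguishable G (p @ u @ s) (p' @ v @ s')"
proof -
  obtain t where t: "t < min (length u) (length v)" "u ! t \<noteq> v ! t" "\<not> G (u ! t) (v ! t)"
    using assms(1) unfolding distinguishable_def by blast
  show ?thesis unfolding distinguishable_def
    by (rule exI[of _ "length p + t"]) (use t assms(2) in \<open>auto simp: nth_append\<close>)
qed

lemma distinguishable_iff_not_strong_power_adj:
  assumes "length x = n" and "length y = n"
  shows "distinguishable G x y \<longleftrightarrow> x \<noteq> y \<and> \<not> strong_power_adj G n x y"
  using assms unfolding distinguishable_def strong_power_adj_def by auto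

lemma distinguishing_code_append:
  assumes f: "distinguishing_code G m k f" and g: "distinguishing_code G n k' g"
  shows "distinguishing_code G (m + n) (k * k') (\<lambda>j. f (j div k') @ g (j mod k'))"
  unfolding distinguishing_code_def
proof (intro conjI allI impI)
  have bounds: "j div k' < k" "j mod k' < k'" if "j < k * k'" for j
  proof -
    have "0 < k'"
      using that by (cases "k' = 0") simp_all
    then show "j div k' < k" "j mod k' < k'"
      using that by (simp_all add: less_mult_imp_div_less mult.commute)
  qed
  fix j assume "j < k * k'"
  then show "length (f (j div k') @ g (j mod k')) = m + n"
    using f g bounds unfolding distinguishing_code_def by simp
  fix j' assume j': "j' < k * k'" and "j \<noteq> j'"
  then consider "j div k' \<noteq> j' div k'" | "j mod k' \<noteq> j' mod k'"
    by (metis div_mod_decomp)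
  then show "distinguishable G (f (j div k') @ g (j mod k')) (f (j' div k') @ g (j' mod k'))"
  proof cases
    case 1
    then show ?thesis
      using distinguishable_append_middle[of G _ _ "[]" "[]"] f bounds \<open>j < k * k'\<close> j'
      unfolding distinguishing_code_def by simp
  next
    case 2
    then show ?thesis
      using distinguishable_append_middle[of G _ _ _ _ "[]" "[]"] f g bounds \<open>j < k * k'\<close> j'
      unfolding distinguishing_code_def by simp
  qed
qed

section \<open>Independence numbers of strong powers\<close>

definition independent_words :: "('a \<Rightarrow> 'a \<Rightarrow> bool) \<Rightarrow> nat \<Rightarrow> 'a list set \<Rightarrow> bool" where
  "independent_words G n S \<longleftrightarrow>
     S \<subseteq> {x. length x = n} \<and> (\<forall>x\<in>S. \<forall>y\<in>S. \<not> strong_power_adj G n x y)"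

lemma independence_number_power_eq_Max:
  "independence_number_power G n = Max (card ` {S. independent_words G n S})"
  unfolding independence_number_power_def independent_words_def by (rule arg_cong[where f = Max]) auto

lemma finite_independent_words:
  "finite {S. independent_words G n (S :: 'a::finite list set)}"
proof (rule finite_subset)
  show "{S. independent_words G n S} \<subseteq> Pow {x. length x = n}"
    unfolding independent_words_def by blast
  show "finite (Pow {x :: 'a list. length x = n})"
    using finite_lists_length_eq[of "UNIV :: 'a set"] by simp
qed

lemma card_le_independence_number_power:
  fixes G :: "'a::finite \<Rightarrow> 'a \<Rightarrow> bool"
  assumes "independent_words G n S"
  shows "card S \<le> independence_number_power G n"
  unfolding independence_number_power_eq_Max
  using assms finite_independent_words by (intro Max_ge) auto

lemma independence_number_power_attained:
  fixes G :: "'a::finite \<Rightarrow> 'a \<Rightarrow> bool"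
  obtains S where "independent_words G n S" and "card S = independence_number_power G n"
proof -
  have "independent_words G n {}"
    unfolding independent_words_def by simp
  then have "independence_number_power G n \<in> card ` {S. independent_words G n S}"
    unfolding independence_number_power_eq_Max using finite_independent_words
    by (intro Max_in) auto
  then show ?thesis using that by auto
qed

lemma independence_number_power_pos:
  fixes G :: "'a::finite \<Rightarrow> 'a \<Rightarrow> bool"
  shows "0 < independence_number_power G n"
proof -
  have "independent_words G n {replicate n undefined}"
    unfolding independent_words_def strong_power_adj_def by simp
  from card_le_independence_number_power[OF this] show ?thesis by simp
qed

lemma independence_number_power_le_card_power:
  fixes G :: "'a::finite \<Rightarrow> 'a \<Rightarrow> bool"
  shows "independence_number_power G n \<le> card (UNIV :: 'a set) ^ n"
proof -
  obtain S where S: "independent_words G n S" "card S = independence_number_power G n"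
    by (rule independence_number_power_attained)
  have "card S \<le> card {x :: 'a list. length x = n}"
    using S(1) finite_lists_length_eq[of "UNIV :: 'a set"] unfolding independent_words_def
    by (intro card_mono) auto
  then show ?thesis
    using S(2) card_lists_length_eq[of "UNIV :: 'a set"] by simp
qed

lemma independence_number_power_0:
  fixes G :: "'a::finite \<Rightarrow> 'a \<Rightarrow> bool"
  shows "independence_number_power G 0 = 1"
  using independence_number_power_pos[of G 0] independence_number_power_le_card_power[of G 0]
  by simp

lemma distinguishing_code_iff_independent_words:
  assumes "inj_on f {..<k}"
  shows "distinguishing_code G n k f \<longleftrightarrow> independent_words G n (f ` {..<k})"
  using assms unfolding distinguishing_code_def independent_words_def inj_on_def
  by (auto simp: distinguishable_iff_not_strong_power_adj subset_iff) (metis strong_power_adj_def)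

lemma distinguishing_code_inj_on:
  "distinguishing_code G n k f \<Longrightarrow> inj_on f {..<k}"
  unfolding distinguishing_code_def inj_on_def using distinguishable_imp_neq by blast

lemma distinguishing_code_le_independence_number_power:
  fixes G :: "'a::finite \<Rightarrow> 'a \<Rightarrow> bool"
  assumes "distinguishing_code G n k f"
  shows "k \<le> independence_number_power G n"
proof -
  have inj: "inj_on f {..<k}"
    using assms by (rule distinguishing_code_inj_on)
  then have "card (f ` {..<k}) = k"
    by (simp add: card_image)
  with card_le_independence_number_power show ?thesis
    using assms inj distinguishing_code_iff_independent_words by metis
qed

lemma ex_distinguishing_code_independence_number_power:
  fixes G :: "'a::finite \<Rightarrow> 'a \<Rightarrow> bool"
  shows "\<exists>f. distinguishing_code G n (independence_number_power G n) f"
proof -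
  obtain S where S: "independent_words G n S" "card S = independence_number_power G n"
    by (rule independence_number_power_attained)
  have "finite S"
    using S(1) finite_lists_length_eq[of "UNIV :: 'a set"] unfolding independent_words_def
    by (auto intro: finite_subset)
  then obtain f where f: "bij_betw f {..<card S} S"
    using ex_bij_betw_nat_finite lessThan_atLeast0 by metis
  then have "distinguishing_code G n (card S) f"
    using S(1) distinguishing_code_iff_independent_words bij_betw_def by metis
  then show ?thesis using S(2) by auto
qed

lemma independence_number_power_mult_le:
  fixes G :: "'a::finite \<Rightarrow> 'a \<Rightarrow> bool"
  shows "independence_number_power G m * independence_number_power G n
           \<le> independence_number_power G (m + n)"
  using ex_distinguishing_code_independence_number_power[of G m]
    ex_distinguishing_code_independence_number_power[of G n]
  by (metis distinguishing_code_append distinguishing_code_le_independence_number_power)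

section \<open>Fekete's lemma\<close>

lemma superadditive_mult_le:
  fixes b :: "nat \<Rightarrow> real"
  assumes super: "\<And>m n. b m + b n \<le> b (m + n)" and "0 \<le> b 0"
  shows "real q * b m \<le> b (q * m)"
proof (induction q)
  case 0
  then show ?case using \<open>0 \<le> b 0\<close> by simp
next
  case (Suc q)
  have "real (Suc q) * b m = b m + real q * b m"
    by (simp add: algebra_simps)
  also have "\<dots> \<le> b m + b (q * m)"
    using Suc by simp
  also have "\<dots> \<le> b (Suc q * m)"
    using super[of m "q * m"] by simp
  finally show ?case .
qed

lemma superadditive_lower_bound:
  fixes b :: "nat \<Rightarrow> real"
  assumes super: "\<And>m n. b m + b n \<le> b (m + n)" and nonneg: "\<And>n. 0 \<le> b n" and "0 < m"
  shows "real n * (b m / real m) - b m \<le> b n"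
proof -
  define q where "q = n div m"
  have n_eq: "n = q * m + n mod m"
    unfolding q_def by simp
  have "n \<le> q * m + m"
    using n_eq mod_less_divisor[OF \<open>0 < m\<close>, of n] by linarith
  then have "real n - real m \<le> real q * real m"
    unfolding of_nat_le_iff[symmetric, where 'a = real] by simp
  then have "(real n - real m) * (b m / real m) \<le> real q * real m * (b m / real m)"
    using nonneg[of m] by (intro mult_right_mono) simp_all
  moreover have "real n * (b m / real m) - b m = (real n - real m) * (b m / real m)"
    using \<open>0 < m\<close> by (simp add: field_simps)
  ultimately have "real n * (b m / real m) - b m \<le> real q * real m * (b m / real m)"
    by simp
  also have "\<dots> = real q * b m"
    using \<open>0 < m\<close> by simp
  also have "\<dots> \<le> b (q * m)"
    using superadditive_mult_le[OF super nonneg] .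
  also have "\<dots> \<le> b n"
    using super[of "q * m" "n mod m"] nonneg[of "n mod m"] n_eq by simp
  finally show ?thesis .
qed

lemma fekete_superadditive:
  fixes b :: "nat \<Rightarrow> real"
  assumes super: "\<And>m n. b m + b n \<le> b (m + n)" and nonneg: "\<And>n. 0 \<le> b n"
    and bounded: "\<And>n. b n \<le> C * real n"
  shows "(\<lambda>n. b n / real n) \<longlonglongrightarrow> (SUP n\<in>{0<..}. b n / real n)"
proof -
  define L where "L = (SUP n\<in>{0<..}. b n / real n)"
  have bdd: "bdd_above ((\<lambda>n. b n / real n) ` {0<..})"
    using bounded by (intro bdd_aboveI2[where M = C]) (simp add: divide_le_eq mult.commute)
  show ?thesis unfolding L_def[symmetric]
  proof (rule order_tendstoI)
    fix a assume "a < L"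
    then obtain m where m: "0 < m" "a < b m / real m"
      unfolding L_def using less_cSUP_iff[OF _ bdd] by auto
    have "\<forall>\<^sub>F n in sequentially. b m / real n < b m / real m - a"
      using m(2) by (intro order_tendstoD(2)[OF lim_const_over_n]) simp
    then show "\<forall>\<^sub>F n in sequentially. a < b n / real n"
      using eventually_gt_at_top[of 0]
    proof eventually_elim
      case (elim n)
      have "(real n * (b m / real m) - b m) / real n \<le> b n / real n"
        using superadditive_lower_bound[OF super nonneg m(1)] elim(2) by (intro divide_right_mono) auto
      then have "b m / real m - b m / real n \<le> b n / real n"
        using elim(2) by (simp add: diff_divide_distrib)
      then show ?case using elim(1) by linarith
    qed
  next
    fix a assume "L < a"
    have le_L: "b n / real n \<le> L" if "0 < n" for n
      unfolding L_def using that by (intro cSUP_upper[OF _ bdd]) simp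
    show "\<forall>\<^sub>F n in sequentially. b n / real n < a"
      using eventually_gt_at_top[of "0 :: nat"]
    proof eventually_elim
      case (elim n)
      then show ?case using le_L[of n] \<open>L < a\<close> by linarith
    qed
  qed
qed

section \<open>The Shannon capacity as a limit\<close>

lemma log_independence_number_power_tendsto:
  fixes G :: "'a::finite \<Rightarrow> 'a \<Rightarrow> bool"
  shows "(\<lambda>n. log 2 (real (independence_number_power G n)) / real n)
           \<longlonglongrightarrow> log 2 (shannon_capacity G)"
proof -
  define b where "b n = ln (real (independence_number_power G n))" for n
  have pos: "0 < real (independence_number_power G n)" for n
    using independence_number_power_pos by simp
  have super: "b m + b n \<le> b (m + n)" for m n
  proof -
    have "b m + b n = ln (real (independence_number_power G m * independence_number_power G n))"
      unfolding b_def using pos by (simp add: ln_mult_pos)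
    also have "\<dots> \<le> b (m + n)"
      unfolding b_def using pos independence_number_power_mult_le[of G m n]
      by (subst ln_le_cancel_iff) (simp_all del: of_nat_mult)
    finally show ?thesis .
  qed
  have nonneg: "0 \<le> b n" for n
    unfolding b_def using independence_number_power_pos[of G n] by simp
  have bounded: "b n \<le> ln (real (card (UNIV :: 'a set))) * real n" for n
  proof -
    have "b n \<le> ln (real (card (UNIV :: 'a set)) ^ n)"
      unfolding b_def using pos independence_number_power_le_card_power[of G n]
      by (subst ln_le_cancel_iff) (simp_all add: finite_UNIV_card_ge_0 flip: of_nat_power)
    then show ?thesis by (simp add: ln_realpow mult.commute)
  qed
  obtain L where L: "(\<lambda>n. b n / real n) \<longlonglongrightarrow> L"
    using fekete_superadditive[OF super nonneg bounded] by blast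
  have "\<forall>\<^sub>F n in sequentially.
          exp (b n / real n) = root n (real (independence_number_power G n))"
    using eventually_gt_at_top[of "0 :: nat"]
    by eventually_elim (metis b_def exp_ln ln_root pos real_root_gt_zero)
  then have "(\<lambda>n. root n (real (independence_number_power G n))) \<longlonglongrightarrow> exp L"
    by (rule Lim_transform_eventually[OF tendsto_exp[OF L]])
  then have capacity: "shannon_capacity G = exp L"
    unfolding shannon_capacity_def by (rule limI)
  have "(\<lambda>n. b n / real n / ln 2) \<longlonglongrightarrow> L / ln 2"
    using L by (intro tendsto_divide tendsto_const) simp_all
  then show ?thesis
    by (simp add: capacity log_def b_def mult.commute)
qed

lemma filterlim_nat_floor_mult_sequentially:
  fixes x :: real
  assumes "0 < x"
  shows "filterlim (\<lambda>k. nat \<lfloor>x * real k\<rfloor>) sequentially sequentially"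
  using filterlim_tendsto_pos_mult_at_top[OF tendsto_const assms filterlim_real_sequentially]
  by (intro filterlim_compose[OF filterlim_nat_sequentially]
      filterlim_compose[OF filterlim_floor_sequentially])

lemma nat_floor_mult_over_tendsto:
  fixes x :: real
  assumes "0 \<le> x"
  shows "(\<lambda>k. real (nat \<lfloor>x * real k\<rfloor>) / real k) \<longlonglongrightarrow> x"
proof (rule tendsto_sandwich)
  show "(\<lambda>k. x - 1 / real k) \<longlonglongrightarrow> x"
    using tendsto_diff[OF tendsto_const lim_const_over_n] by simp
  show "\<forall>\<^sub>F k in sequentially. x - 1 / real k \<le> real (nat \<lfloor>x * real k\<rfloor>) / real k"
    using eventually_gt_at_top[of "0 :: nat"]
  proof eventually_elim
    case (elim k)
    have "x - 1 / real k = (x * real k - 1) / real k"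
      using elim by (simp add: field_simps)
    also have "\<dots> \<le> real (nat \<lfloor>x * real k\<rfloor>) / real k"
      by (intro divide_right_mono) linarith+
    finally show ?case .
  qed
  show "\<forall>\<^sub>F k in sequentially. real (nat \<lfloor>x * real k\<rfloor>) / real k \<le> x"
    using eventually_gt_at_top[of "0 :: nat"]
  proof eventually_elim
    case (elim k)
    have "real (nat \<lfloor>x * real k\<rfloor>) \<le> x * real k"
      using assms by simp
    then show ?case
      using elim by (simp add: field_simps)
  qed
qed simp

lemma tendsto_nat_floor_mult_over:
  fixes b :: "nat \<Rightarrow> real"
  assumes lim: "(\<lambda>n. b n / real n) \<longlonglongrightarrow> L" and "b 0 = 0" and "0 \<le> x"
  shows "(\<lambda>k. b (nat \<lfloor>x * real k\<rfloor>) / real k) \<longlonglongrightarrow> x * L"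
proof (cases "x = 0")
  case True
  then show ?thesis using \<open>b 0 = 0\<close> by simp
next
  case False
  define l where "l k = nat \<lfloor>x * real k\<rfloor>" for k
  have "(\<lambda>k. b (l k) / real (l k) * (real (l k) / real k)) \<longlonglongrightarrow> L * x"
    unfolding l_def using False \<open>0 \<le> x\<close>
    by (intro tendsto_mult filterlim_compose[OF lim] filterlim_nat_floor_mult_sequentially
        nat_floor_mult_over_tendsto) simp_all
  moreover have "b (l k) / real (l k) * (real (l k) / real k) = b (l k) / real k" for k
    using \<open>b 0 = 0\<close> by (cases "l k = 0") simp_all
  ultimately show ?thesis
    unfolding l_def by (simp add: mult.commute)
qed

section \<open>Feasibility by time sharing\<close>

lemma length_concat_map_upt:
  "(\<And>j. j < i \<Longrightarrow> length (w j) = l j) \<Longrightarrow>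
    length (concat (map w [0..<i])) = (\<Sum>j<i. l j)"
  by (induction i) auto

lemma concat_map_upt_split:
  assumes "i < r"
  shows "concat (map w [0..<r]) = concat (map w [0..<i]) @ w i @ concat (map w [Suc i..<r])"
proof -
  have "[0..<r] = [0..<i] @ i # [Suc i..<r]"
    using assms upt_add_eq_append[of 0 i "r - i"] upt_conv_Cons[of i r] by simp
  then show ?thesis by simp
qed

lemma feasible_vector_concat_codes:
  assumes pos: "\<forall>i<r. 0 < m i"
    and codes: "\<forall>i<r. distinguishing_code (G i) (l i) (m i) (F i)"
    and total: "(\<Sum>i<r. l i) \<le> n"
  shows "feasible_vector G r n m"
proof -
  define W where "W a i = F i (a i)" for a i
  define E where "E a = concat (map (W a) [0..<r]) @ replicate (n - (\<Sum>i<r. l i)) undefined" for a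
  have length_prefix: "length (concat (map (W a) [0..<i])) = (\<Sum>j<i. l j)"
    if "\<forall>j<r. a j < m j" and "i \<le> r" for a i
    using that codes unfolding W_def distinguishing_code_def
    by (intro length_concat_map_upt) simp
  have "\<forall>a. (\<forall>i<r. a i < m i) \<longrightarrow> length (E a) = n"
    using length_prefix total unfolding E_def by simp
  moreover have "distinguishable (G i) (E a) (E a')"
    if "i < r" "\<forall>j<r. a j < m j" "\<forall>j<r. a' j < m j" "a i \<noteq> a' i" for i a a'
  proof -
    have "distinguishable (G i) (W a i) (W a' i)"
      using codes that unfolding W_def distinguishing_code_def by simp
    then show ?thesis
      unfolding E_def concat_map_upt_split[OF \<open>i < r\<close>, of "W a"]
        concat_map_upt_split[OF \<open>i < r\<close>, of "W a'"]
      unfolding append_assoc using that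
      by (intro distinguishable_append_middle) (simp_all add: length_prefix)
  qed
  ultimately show ?thesis
    unfolding feasible_vector_def using pos by blast
qed

lemma sum_nat_floor_mult_le:
  fixes x :: "'i \<Rightarrow> real"
  assumes "\<forall>i\<in>A. 0 \<le> x i" and "sum x A = 1"
  shows "(\<Sum>i\<in>A. nat \<lfloor>x i * real k\<rfloor>) \<le> k"
proof -
  have "real (\<Sum>i\<in>A. nat \<lfloor>x i * real k\<rfloor>) \<le> (\<Sum>i\<in>A. x i * real k)"
    unfolding of_nat_sum using assms(1) by (intro sum_mono) simp
  also have "\<dots> = real k"
    using assms(2) by (simp flip: sum_distrib_right)
  finally show ?thesis by (simp only: of_nat_le_iff)
qed

theorem corollary4:
  fixes G :: "nat \<Rightarrow> 'a::finite \<Rightarrow> 'a \<Rightarrow> bool"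
    and r :: nat
    and x :: "nat \<Rightarrow> real"
  assumes "\<forall>i<r. confusion_graph (G i)"
    and "\<forall>i<r. 0 \<le> x i \<and> x i \<le> 1"
    and "(\<Sum>i<r. x i) = 1"
  shows "feasible_rate G r (\<lambda>i. x i * log 2 (shannon_capacity (G i)))"
proof -
  define l where "l k i = nat \<lfloor>x i * real k\<rfloor>" for k i
  define m where "m k i = independence_number_power (G i) (l k i)" for k i
  define F where "F k i = (SOME f. distinguishing_code (G i) (l k i) (m k i) f)" for k i
  have "feasible_vector G r k (m k)" for k
  proof (rule feasible_vector_concat_codes)
    show "\<forall>i<r. 0 < m k i"
      unfolding m_def by (simp add: independence_number_power_pos)
    show "\<forall>i<r. distinguishing_code (G i) (l k i) (m k i) (F k i)"
      unfolding F_def m_def by (metis someI_ex ex_distinguishing_code_independence_number_power)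
    show "(\<Sum>i<r. l k i) \<le> k"
      unfolding l_def using assms(2,3) by (intro sum_nat_floor_mult_le) simp_all
  qed
  moreover have
    "(\<lambda>k. log 2 (real (m k i)) / real k) \<longlonglongrightarrow> x i * log 2 (shannon_capacity (G i))"
    if "i < r" for i
    unfolding m_def l_def using that assms(2)
    by (intro tendsto_nat_floor_mult_over log_independence_number_power_tendsto)
      (simp_all add: independence_number_power_0)
  ultimately show ?thesis
    unfolding feasible_rate_def using filterlim_ident by blast
qed

end
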